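(* Let $(X,f)$ be a dynamical system. The following are equivalent: (1) $(X,f)$ is strongly multi-transitive; (2) $(X,f)$ is weakly mixing and multi-transitive; (3) $(X,f)$ is $\mathcal{F}[\infty]$-mixing; (4) $(X,f)$ is $\mathcal{F}_{smt}$-point transitive, where $\mathcal{F}_{smt}=\nabla(\mathcal{F}[\infty]\cap\mathcal{F}_t)$.
   Context: A dynamical system is a pair $(X,f)$ with $X$ a compact metric space and $f:X\to X$ continuous. $\mathbb{N}=\{1,2,\dots\}$, $\mathbb{Z}_+=\{0,1,2,\dots\}$. $N(U,V)=\{n\in\mathbb{N}: U\cap f^{-n}(V)\neq\emptyset\}$, $N(x,U)=\{n\in\mathbb{N}: f^n(x)\in U\}$. $(X,f)$ is transitive if $N(U,V)\neq\emptyset$ for all non-empty open $U,V$; weakly mixing if $(X\times X,f\times f)$ is transitive. For $\mathbf{a}=(a_1,\dots,a_r)\in\mathbb{N}^r$, $(X,f)$ is $\mathbf{a}$-transitive if $(X^r,f^{a_1}\times\dots\times f^{a_r})$ is transitive; multi-transitive if it is $(1,2,\dots,n)$-transitive for every $n\in\mathbb{N}$; strongly multi-transitive if it is $\mathbf{a}$-transitive for every $r\in\mathbb{N}$ and every $\mathbf{a}\in\mathbb{N}^r$. For a family $\mathcal{F}$ of subsets of $\mathbb{N}$: $(X,f)$ is $\mathcal{F}$-transitive if $N(U,V)\in\mathcal{F}$ for all non-empty open $U,V$; $\mathcal{F}$-mixing if $(X\times X,f\times f)$ is $\mathcal{F}$-transitive; $x$ is an $\mathcal{F}$-transitive point if $N(x,U)\in\mathcal{F}$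 for every non-empty open $U$, and $(X,f)$ is $\mathcal{F}$-point transitive if such a point exists. For $F\subset\mathbb{N}$, $F-F=\{a-b:a,b\in F,\ a>b\}$ and $\nabla(\mathcal{F})=\{F\subset\mathbb{N}: F-F\in\mathcal{F}\}$. $\mathcal{F}_t$ is the family of thick sets ($F$ such that for every $n$ there is $a$ with $\{a,\dots,a+n\}\subset F$). $\mathcal{F}[\mathbf{a}]$ is the collection of all $F\subset\mathbb{N}$ such that for every $(n_1,\dots,n_r)\in\mathbb{Z}_+^r$ there is $k\in\mathbb{N}$ with $ka_i+n_i\in F$ for all $i$; $\mathcal{F}[\infty]=\bigcap_{i=1}^\infty\mathcal{F}[(1,2,\dots,i)]$. *)

theory Defs
  imports "HOL-Analysis.Analysis"
begin

text \<open>A general topological system (T, g), where g maps topspace T into itself.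
  Return-time sets; natural numbers are N = {1,2,...}.\<close>

definition hit_times :: "'a topology \<Rightarrow> ('a \<Rightarrow> 'a) \<Rightarrow> 'a set \<Rightarrow> 'a set \<Rightarrow> nat set" where
  "hit_times T g U V = {n. n \<ge> 1 \<and> U \<inter> ((g ^^ n) -` V) \<inter> topspace T \<noteq> {}}"

definition visit_times :: "('a \<Rightarrow> 'a) \<Rightarrow> 'a \<Rightarrow> 'a set \<Rightarrow> nat set" where
  "visit_times g x U = {n. n \<ge> 1 \<and> (g ^^ n) x \<in> U}"

definition top_transitive :: "'a topology \<Rightarrow> ('a \<Rightarrow> 'a) \<Rightarrow> bool" where
  "top_transitive T g \<longleftrightarrow>
     (\<forall>U V. openin T U \<and> U \<noteq> {} \<and> openin T V \<and> V \<noteq> {} \<longrightarrow> hit_times T g U V \<noteq> {})"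

definition F_transitive :: "nat set set \<Rightarrow> 'a topology \<Rightarrow> ('a \<Rightarrow> 'a) \<Rightarrow> bool" where
  "F_transitive \<F> T g \<longleftrightarrow>
     (\<forall>U V. openin T U \<and> U \<noteq> {} \<and> openin T V \<and> V \<noteq> {} \<longrightarrow> hit_times T g U V \<in> \<F>)"

definition F_point_transitive :: "nat set set \<Rightarrow> 'a topology \<Rightarrow> ('a \<Rightarrow> 'a) \<Rightarrow> bool" where
  "F_point_transitive \<F> T g \<longleftrightarrow>
     (\<exists>x\<in>topspace T. \<forall>U. openin T U \<and> U \<noteq> {} \<longrightarrow> visit_times g x U \<in> \<F>)"

definition prod_map :: "('a \<Rightarrow> 'a) \<Rightarrow> 'a \<times> 'a \<Rightarrow> 'a \<times> 'a" where
  "prod_map g z = (g (fst z), g (snd z))"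

definition weakly_mixing :: "'a topology \<Rightarrow> ('a \<Rightarrow> 'a) \<Rightarrow> bool" where
  "weakly_mixing T g \<longleftrightarrow> top_transitive (prod_topology T T) (prod_map g)"

definition F_mixing :: "nat set set \<Rightarrow> 'a topology \<Rightarrow> ('a \<Rightarrow> 'a) \<Rightarrow> bool" where
  "F_mixing \<F> T g \<longleftrightarrow> F_transitive \<F> (prod_topology T T) (prod_map g)"

text \<open>The vector a = (a_1,...,a_r) is a list of positive naturals of length r;
  X^r is the product topology indexed by {..<r}, and the map is f^{a_1} x ... x f^{a_r}.\<close>

definition power_prod_map :: "nat list \<Rightarrow> ('a \<Rightarrow> 'a) \<Rightarrow> (nat \<Rightarrow> 'a) \<Rightarrow> (nat \<Rightarrow> 'a)" where
  "power_prod_map as g x = (\<lambda>i\<in>{..<length as}. (g ^^ (as ! i)) (x i))"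

definition vec_transitive :: "nat list \<Rightarrow> 'a topology \<Rightarrow> ('a \<Rightarrow> 'a) \<Rightarrow> bool" where
  "vec_transitive as T g \<longleftrightarrow>
     top_transitive (product_topology (\<lambda>i. T) {..<length as}) (power_prod_map as g)"

definition multi_transitive :: "'a topology \<Rightarrow> ('a \<Rightarrow> 'a) \<Rightarrow> bool" where
  "multi_transitive T g \<longleftrightarrow> (\<forall>n\<ge>1. vec_transitive [1..<n+1] T g)"

definition strongly_multi_transitive :: "'a topology \<Rightarrow> ('a \<Rightarrow> 'a) \<Rightarrow> bool" where
  "strongly_multi_transitive T g \<longleftrightarrow>
     (\<forall>as. as \<noteq> [] \<and> (\<forall>a\<in>set as. a \<ge> 1) \<longrightarrow> vec_transitive as T g)"

definition thick_sets :: "nat set set" where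
  "thick_sets = {F. F \<subseteq> {1..} \<and> (\<forall>n. \<exists>a. {a..a+n} \<subseteq> F)}"

definition F_vec :: "nat list \<Rightarrow> nat set set" where
  "F_vec as = {F. F \<subseteq> {1..} \<and>
     (\<forall>ns. length ns = length as \<longrightarrow> (\<exists>k\<ge>1. \<forall>i<length as. k * as ! i + ns ! i \<in> F))}"

definition F_infty :: "nat set set" where
  "F_infty = (\<Inter>i\<in>{1..}. F_vec [1..<i+1])"

definition diff_set :: "nat set \<Rightarrow> nat set" where
  "diff_set F = {a - b | a b. a \<in> F \<and> b \<in> F \<and> a > b}"

definition nabla :: "nat set set \<Rightarrow> nat set set" where
  "nabla \<F> = {F. F \<subseteq> {1..} \<and> diff_set F \<in> \<F>}"

definition F_smt :: "nat set set" where
  "F_smt = nabla (F_infty \<inter> thick_sets)"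

end

theory Submission
  imports Defs
begin

text \<open>
  Weak mixing lets one replace finitely many pairs of open sets by a single pair whose hitting
  times are common to all of them (Furstenberg's intersection lemma). Under weak mixing, the hits
  \<open>k, 2k, \<dots>, mk\<close> of one pair provided by multi-transitivity therefore become simultaneous hits
  \<open>k a\<^sub>1, \<dots>, k a\<^sub>r\<close> of any finitely many pairs; applied to the pairs \<open>(U, f\<^sup>-\<^sup>c V)\<close> they
  show that \<open>N(U,V)\<close> is thick and lies in \<open>\<F>[\<infinity>]\<close>.

  If the differences of the visit times of \<open>x\<close> to every open set lie in \<open>\<F>[\<infinity>] \<inter> \<F>\<^sub>t\<close>,
  then so do the return times \<open>N(W,W)\<close> of the neighbourhood
  \<open>W = f\<^sup>-\<^sup>a U \<inter> f\<^sup>-\<^sup>b V\<close> of \<open>x\<close> (with \<open>a < b\<close> visit times), and \<open>N(U,V) \<supseteq> N(W,W) + (b - a)\<close>;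
  thickness of \<open>N(W,W)\<close> for two such pairs gives weak mixing. Conversely, for \<open>c \<in> N(B,B)\<close> the
  points \<open>x\<close> with \<open>c \<in> N(x,B) - N(x,B)\<close> form an open dense set, so by Baire's theorem one point
  satisfies \<open>N(B,B) \<subseteq> N(x,B) - N(x,B)\<close> for every \<open>B\<close> of a countable base.
\<close>

section \<open>Families of sets of natural numbers\<close>

lemma F_infty_iff:
  "A \<in> F_infty \<longleftrightarrow> A \<subseteq> {1..} \<and> (\<forall>ns. \<exists>k\<ge>1. \<forall>j<length ns. k * (j + 1) + ns ! j \<in> A)"
proof -
  have F_vec_iff: "A \<in> F_vec [1..<i + 1] \<longleftrightarrow>
      A \<subseteq> {1..} \<and> (\<forall>ns. length ns = i \<longrightarrow> (\<exists>k\<ge>1. \<forall>j<i. k * (j + 1) + ns ! j \<in> A))" for i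
    unfolding F_vec_def by (simp add: add.commute del: upt_Suc)
  show ?thesis
  proof
    assume "A \<in> F_infty"
    then have A: "A \<in> F_vec [1..<i + 1]" if "i \<ge> 1" for i
      using that unfolding F_infty_def by blast
    have "\<exists>k\<ge>1. \<forall>j<length ns. k * (j + 1) + ns ! j \<in> A" for ns
    proof (cases "ns = []")
      case False
      then show ?thesis using A[of "length ns"] unfolding F_vec_iff by (simp add: Suc_le_eq)
    qed auto
    then show "A \<subseteq> {1..} \<and> (\<forall>ns. \<exists>k\<ge>1. \<forall>j<length ns. k * (j + 1) + ns ! j \<in> A)"
      using A[of 1] unfolding F_vec_iff by simp
  next
    assume "A \<subseteq> {1..} \<and> (\<forall>ns. \<exists>k\<ge>1. \<forall>j<length ns. k * (j + 1) + ns ! j \<in> A)"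
    then show "A \<in> F_infty"
      unfolding F_infty_def INT_iff F_vec_iff by auto
  qed
qed

lemma F_inftyD: "A \<in> F_infty \<Longrightarrow> \<exists>k\<ge>1. \<forall>j<length ns. k * (j + 1) + ns ! j \<in> A"
  unfolding F_infty_iff by (elim conjE allE)

lemma F_infty_superset:
  assumes "A \<in> F_infty" and "A \<subseteq> B" and "B \<subseteq> {1..}"
  shows "B \<in> F_infty"
proof -
  have "\<exists>k\<ge>1. \<forall>j<length ns. k * (j + 1) + ns ! j \<in> B" for ns
    using F_inftyD[OF assms(1), of ns] assms(2) by blast
  then show ?thesis
    using assms(3) unfolding F_infty_iff by blast
qed

lemma F_infty_shift:
  assumes "A \<in> F_infty"
  shows "(\<lambda>n. n + c) ` A \<in> F_infty"
  unfolding F_infty_iff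
proof (intro conjI allI)
  show "(\<lambda>n. n + c) ` A \<subseteq> {1..}"
    using assms unfolding F_infty_iff by auto
  fix ns :: "nat list"
  define ms where "ms = map (\<lambda>j. ns ! j + c * j) [0..<length ns]"
  obtain k where k: "k \<ge> 1" "\<forall>j<length ms. k * (j + 1) + ms ! j \<in> A"
    using F_inftyD[OF assms] by blast
  have "(k + c) * (j + 1) + ns ! j \<in> (\<lambda>n. n + c) ` A" if "j < length ns" for j
  proof
    show "(k + c) * (j + 1) + ns ! j = k * (j + 1) + ms ! j + c"
      using that by (simp add: ms_def algebra_simps)
    show "k * (j + 1) + ms ! j \<in> A"
      using k(2) that by (simp add: ms_def)
  qed
  moreover have "k + c \<ge> 1"
    using k(1) by simp
  ultimately show "\<exists>k\<ge>1. \<forall>j<length ns. k * (j + 1) + ns ! j \<in> (\<lambda>n. n + c) ` A"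
    by blast
qed

text \<open>The zero-shift part of \<open>\<F>[(1, \<dots>, m)]\<close>, for all \<open>m\<close> at once.\<close>

definition multiple_progression_sets :: "nat set set" where
  "multiple_progression_sets = {A. \<forall>m. \<exists>k\<ge>1. \<forall>j\<in>{1..m}. k * j \<in> A}"

lemma F_infty_subset_multiple_progression_sets: "F_infty \<subseteq> multiple_progression_sets"
proof
  fix A assume A: "A \<in> F_infty"
  have "\<exists>k\<ge>1. \<forall>j\<in>{1..m}. k * j \<in> A" for m
  proof -
    obtain k where k: "k \<ge> 1" "\<forall>j<length (replicate m 0). k * (j + 1) + replicate m 0 ! j \<in> A"
      using F_inftyD[OF A, of "replicate m 0"] by auto
    have "k * j \<in> A" if "j \<in> {1..m}" for j
    proof -
      have "j - 1 < m" "j - 1 + 1 = j"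
        using that by auto
      then show ?thesis
        using k(2) by (metis length_replicate nth_replicate add_0_right)
    qed
    then show ?thesis
      using k(1) by blast
  qed
  then show "A \<in> multiple_progression_sets"
    unfolding multiple_progression_sets_def by blast
qed

lemma F_infty_nonempty:
  assumes "A \<in> F_infty"
  shows "A \<noteq> {}"
proof -
  have "A \<in> multiple_progression_sets"
    using assms F_infty_subset_multiple_progression_sets by blast
  then obtain k where "\<forall>j\<in>{1..1}. k * j \<in> A"
    unfolding multiple_progression_sets_def by blast
  then show ?thesis
    by auto
qed

lemma thick_sets_superset: "A \<in> thick_sets \<Longrightarrow> A \<subseteq> B \<Longrightarrow> B \<subseteq> {1..} \<Longrightarrow> B \<in> thick_sets"
  unfolding thick_sets_def by blast

lemma diff_set_mono: "A \<subseteq> B \<Longrightarrow> diff_set A \<subseteq> diff_set B"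
  unfolding diff_set_def by blast

lemma diff_set_positive: "diff_set A \<subseteq> {1..}"
  unfolding diff_set_def by auto

lemma funpow_funpow_apply: "(g ^^ m) ((g ^^ n) x) = (g ^^ (m + n)) x"
  by (simp add: funpow_add)

lemma visit_times_mono: "U \<subseteq> V \<Longrightarrow> visit_times g x U \<subseteq> visit_times g x V"
  unfolding visit_times_def by blast

lemma visit_times_positive: "visit_times g x U \<subseteq> {1..}"
  unfolding visit_times_def by auto

section \<open>Compact metric spaces\<close>

lemma compact_imp_second_countable:
  fixes X :: "'a::metric_space set"
  assumes "compact X"
  shows "second_countable (top_of_set X)"
proof -
  have "\<exists>K. finite K \<and> K \<subseteq> X \<and> X \<subseteq> (\<Union>d\<in>K. ball d (inverse (Suc m)))" for m :: nat
  proof -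
    have cover: "X \<subseteq> (\<Union>d\<in>X. ball d (inverse (Suc m)))"
      by auto
    obtain K where "K \<subseteq> X" "finite K" "X \<subseteq> (\<Union>d\<in>K. ball d (inverse (Suc m)))"
      by (rule compactE_image[OF assms _ cover]) simp_all
    then show ?thesis
      by blast
  qed
  then have "\<exists>K. \<forall>m::nat. finite (K m) \<and> K m \<subseteq> X \<and> X \<subseteq> (\<Union>d\<in>K m. ball d (inverse (Suc m)))"
    by (rule choice[OF allI])
  then obtain K where K: "\<And>m. finite (K m)" "\<And>m. K m \<subseteq> X"
    "\<And>m. X \<subseteq> (\<Union>d\<in>K m. ball d (inverse (Suc m)))"
    by blast
  define \<B> where "\<B> = (\<lambda>(m, d). X \<inter> ball d (inverse (Suc m))) ` (SIGMA m:UNIV. K m)"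
  have "countable \<B>"
    unfolding \<B>_def using K(1) by (intro countable_image countable_SIGMA) (auto intro: countable_finite)
  moreover have "openin (top_of_set X) B" if "B \<in> \<B>" for B
    using that unfolding \<B>_def by auto
  moreover have "\<exists>B\<in>\<B>. y \<in> B \<and> B \<subseteq> U" if U: "openin (top_of_set X) U" and y: "y \<in> U" for U y
  proof -
    obtain r where r: "r > 0" "ball y r \<inter> X \<subseteq> U"
      using U y unfolding openin_contains_ball by blast
    obtain m :: nat where m: "inverse (Suc m) < r / 2"
      using reals_Archimedean[of "r / 2"] r(1) by auto
    have "y \<in> X"
      using U y openin_imp_subset by blast
    then obtain d where d: "d \<in> K m" "y \<in> ball d (inverse (Suc m))"
      using K(3) by blast
    have "ball d (inverse (Suc m)) \<subseteq> ball y r"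
    proof
      fix z assume "z \<in> ball d (inverse (Suc m))"
      then have "dist y z < r / 2 + r / 2"
        using d(2) m dist_triangle[of y z d] by (simp add: dist_commute)
      then show "z \<in> ball y r"
        by simp
    qed
    then have "X \<inter> ball d (inverse (Suc m)) \<subseteq> U"
      using r(2) by blast
    moreover have "X \<inter> ball d (inverse (Suc m)) \<in> \<B>"
      unfolding \<B>_def using d(1) by (intro image_eqI[of _ _ "(m, d)"]) auto
    ultimately show ?thesis
      using \<open>y \<in> X\<close> d(2) by blast
  qed
  ultimately show ?thesis
    unfolding second_countable_def by blast
qed

lemma compact_Baire:
  fixes X :: "'a::metric_space set"
  assumes "compact X" and "X \<noteq> {}" and "countable \<G>"
    and "\<And>G. G \<in> \<G> \<Longrightarrow> openin (top_of_set X) G \<and> (top_of_set X) closure_of G = X"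
  obtains x where "x \<in> X" and "\<And>G. G \<in> \<G> \<Longrightarrow> x \<in> G"
proof -
  have "locally_compact_space (top_of_set X)"
    using assms(1) by (simp add: compact_imp_locally_compact_space compact_space_subtopology)
  moreover have "regular_space (top_of_set X)"
    by (intro regular_space_subtopology regular_space_euclidean)
  ultimately have "(top_of_set X) closure_of \<Inter>\<G> = X"
    using Baire_category[of "top_of_set X" \<G>] assms(3,4) by simp
  then have "X \<inter> \<Inter>\<G> \<noteq> {}"
    using assms(2) closure_of_restrict[of "top_of_set X" "\<Inter>\<G>"] by force
  then show ?thesis
    using that by blast
qed

section \<open>Hitting times of a self-map of a topological space\<close>

locale self_map =
  fixes T :: "'a topology" and g :: "'a \<Rightarrow> 'a"
begin

abbreviation N :: "'a set \<Rightarrow> 'a set \<Rightarrow> nat set" where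
  "N \<equiv> hit_times T g"

abbreviation nonempty_open :: "'a set \<Rightarrow> bool" where
  "nonempty_open U \<equiv> openin T U \<and> U \<noteq> {}"

lemma hit_times_iff: "n \<in> N U V \<longleftrightarrow> 1 \<le> n \<and> (\<exists>x\<in>U \<inter> topspace T. (g ^^ n) x \<in> V)"
  unfolding hit_times_def by blast

lemma hit_times_mono: "U \<subseteq> U' \<Longrightarrow> V \<subseteq> V' \<Longrightarrow> N U V \<subseteq> N U' V'"
  unfolding hit_times_def by blast

lemma hit_times_positive: "N U V \<subseteq> {1..}"
  unfolding hit_times_def by auto

lemma F_transitive_mono: "F_transitive \<F> T g \<Longrightarrow> \<F> \<subseteq> \<G> \<Longrightarrow> F_transitive \<G> T g"
  unfolding F_transitive_def by blast

lemma funpow_prod_map: "(prod_map g ^^ n) z = ((g ^^ n) (fst z), (g ^^ n) (snd z))"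
  by (induction n) (auto simp: prod_map_def)

lemma hit_times_prod_map_Times:
  "hit_times (prod_topology T T) (prod_map g) (U1 \<times> U2) (V1 \<times> V2) = N U1 V1 \<inter> N U2 V2"
  unfolding hit_times_def funpow_prod_map by auto

lemma openin_prod_topology_contains_Times:
  assumes "openin (prod_topology T T) W" and "W \<noteq> {}"
  obtains U1 U2 where "nonempty_open U1" "nonempty_open U2" "U1 \<times> U2 \<subseteq> W"
proof -
  obtain x y where "(x, y) \<in> W"
    using assms(2) by auto
  then show ?thesis
    using assms(1) that unfolding openin_prod_topology_alt by (metis emptyE)
qed

lemma F_mixing_iff_Int_hit_times:
  assumes superset: "\<And>A B. A \<in> \<F> \<Longrightarrow> A \<subseteq> B \<Longrightarrow> B \<subseteq> {1..} \<Longrightarrow> B \<in> \<F>"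
  shows "F_mixing \<F> T g \<longleftrightarrow> (\<forall>U1 V1 U2 V2. nonempty_open U1 \<longrightarrow> nonempty_open V1 \<longrightarrow>
           nonempty_open U2 \<longrightarrow> nonempty_open V2 \<longrightarrow> N U1 V1 \<inter> N U2 V2 \<in> \<F>)"
    (is "_ \<longleftrightarrow> ?boxes")
proof
  assume mixing: "F_mixing \<F> T g"
  show ?boxes
  proof (intro allI impI)
    fix U1 V1 U2 V2
    assume "nonempty_open U1" "nonempty_open V1" "nonempty_open U2" "nonempty_open V2"
    then have "openin (prod_topology T T) (U1 \<times> U2)" "U1 \<times> U2 \<noteq> {}"
      "openin (prod_topology T T) (V1 \<times> V2)" "V1 \<times> V2 \<noteq> {}"
      by (simp_all add: openin_prod_Times_iff)
    then show "N U1 V1 \<inter> N U2 V2 \<in> \<F>"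
      using mixing unfolding F_mixing_def F_transitive_def hit_times_prod_map_Times[symmetric]
      by blast
  qed
next
  assume boxes: ?boxes
  show "F_mixing \<F> T g"
    unfolding F_mixing_def F_transitive_def
  proof (intro allI impI)
    fix W W'
    assume "openin (prod_topology T T) W \<and> W \<noteq> {} \<and> openin (prod_topology T T) W' \<and> W' \<noteq> {}"
    then obtain U1 U2 V1 V2 where
      U: "nonempty_open U1" "nonempty_open U2" "U1 \<times> U2 \<subseteq> W" and
      V: "nonempty_open V1" "nonempty_open V2" "V1 \<times> V2 \<subseteq> W'"
      by (metis openin_prod_topology_contains_Times)
    have "hit_times (prod_topology T T) (prod_map g) (U1 \<times> U2) (V1 \<times> V2) \<in> \<F>"
      using boxes U V by (simp add: hit_times_prod_map_Times)
    moreover have "hit_times (prod_topology T T) (prod_map g) (U1 \<times> U2) (V1 \<times> V2)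
        \<subseteq> hit_times (prod_topology T T) (prod_map g) W W'"
      using U(3) V(3) by (rule self_map.hit_times_mono)
    ultimately show "hit_times (prod_topology T T) (prod_map g) W W' \<in> \<F>"
      using superset self_map.hit_times_positive by blast
  qed
qed

lemma weakly_mixing_iff_Int_hit_times:
  "weakly_mixing T g \<longleftrightarrow> (\<forall>U1 V1 U2 V2. nonempty_open U1 \<longrightarrow> nonempty_open V1 \<longrightarrow>
     nonempty_open U2 \<longrightarrow> nonempty_open V2 \<longrightarrow> N U1 V1 \<inter> N U2 V2 \<noteq> {})"
    (is "_ \<longleftrightarrow> ?boxes")
proof -
  have "weakly_mixing T g \<longleftrightarrow> F_mixing {A. A \<noteq> {}} T g"
    unfolding weakly_mixing_def F_mixing_def top_transitive_def F_transitive_def by simp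
  also have "\<dots> \<longleftrightarrow> ?boxes"
    by (subst F_mixing_iff_Int_hit_times) auto
  finally show ?thesis .
qed

lemma funpow_power_prod_map:
  assumes "z \<in> extensional {..<length as}"
  shows "(power_prod_map as g ^^ n) z = (\<lambda>i\<in>{..<length as}. (g ^^ (n * as ! i)) (z i))"
proof (induction n)
  case 0
  then show ?case
    using assms by (simp add: extensional_restrict)
next
  case (Suc n)
  have "(power_prod_map as g ^^ Suc n) z
      = power_prod_map as g (\<lambda>i\<in>{..<length as}. (g ^^ (n * as ! i)) (z i))"
    by (simp only: funpow.simps(2) o_apply Suc.IH)
  also have "\<dots> = (\<lambda>i\<in>{..<length as}. (g ^^ (Suc n * as ! i)) (z i))"
    unfolding power_prod_map_def by (intro restrict_ext) (simp add: funpow_add)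
  finally show ?case .
qed

lemma openin_PiE_lessThan:
  fixes n :: nat
  assumes "\<forall>i<n. openin T (U i)"
  shows "openin (product_topology (\<lambda>i. T) {..<n}) (PiE {..<n} U)"
proof -
  have "finite {i \<in> {..<n}. U i \<noteq> topspace T}"
    by (rule finite_subset[of _ "{..<n}"]) auto
  then show ?thesis
    using assms by (simp add: openin_PiE_gen)
qed

lemma vec_transitive_iff:
  assumes "\<forall>a\<in>set as. 1 \<le> a"
  shows "vec_transitive as T g \<longleftrightarrow>
    (\<forall>U V. (\<forall>i<length as. nonempty_open (U i) \<and> nonempty_open (V i)) \<longrightarrow>
       (\<exists>n\<ge>1. \<forall>i<length as. n * as ! i \<in> N (U i) (V i)))"
    (is "_ \<longleftrightarrow> ?simultaneous")
proof
  let ?I = "{..<length as}"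
  let ?PT = "product_topology (\<lambda>i. T) ?I"
  let ?P = "power_prod_map as g"
  show ?simultaneous if transitive: "vec_transitive as T g"
  proof (intro allI impI)
    fix U V :: "nat \<Rightarrow> 'a set"
    assume UV: "\<forall>i<length as. nonempty_open (U i) \<and> nonempty_open (V i)"
    have "openin ?PT (PiE ?I U)" "openin ?PT (PiE ?I V)"
      using UV by (simp_all add: openin_PiE_lessThan)
    moreover have "PiE ?I U \<noteq> {}" "PiE ?I V \<noteq> {}"
      using UV by (simp_all add: PiE_eq_empty_iff)
    ultimately have "hit_times ?PT ?P (PiE ?I U) (PiE ?I V) \<noteq> {}"
      using transitive[unfolded vec_transitive_def top_transitive_def, rule_format,
          of "PiE ?I U" "PiE ?I V"]
      by simp
    then obtain n where "n \<in> hit_times ?PT ?P (PiE ?I U) (PiE ?I V)"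
      by blast
    then have n: "1 \<le> n" and "PiE ?I U \<inter> (?P ^^ n) -` PiE ?I V \<inter> topspace ?PT \<noteq> {}"
      unfolding hit_times_def by simp_all
    then obtain z where z: "z \<in> PiE ?I U" "(?P ^^ n) z \<in> PiE ?I V" "z \<in> topspace ?PT"
      by blast
    have extensional: "z \<in> extensional ?I"
      using z(1) by (simp add: PiE_iff)
    have "n * as ! i \<in> N (U i) (V i)" if "i < length as" for i
    proof -
      have "z i \<in> U i \<inter> topspace T"
        using z(1,3) that by (simp add: PiE_iff)
      moreover have "(g ^^ (n * as ! i)) (z i) \<in> V i"
        using z(2) that unfolding funpow_power_prod_map[OF extensional]
        by (simp add: PiE_iff)
      moreover have "1 \<le> n * as ! i"
        using assms n that by simp
      ultimately show ?thesis
        unfolding hit_times_iff by blast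
    qed
    then show "\<exists>n\<ge>1. \<forall>i<length as. n * as ! i \<in> N (U i) (V i)"
      using n by blast
  qed
  show "vec_transitive as T g" if simultaneous: ?simultaneous
    unfolding vec_transitive_def top_transitive_def
  proof (intro allI impI)
    fix W W'
    assume WW: "openin ?PT W \<and> W \<noteq> {} \<and> openin ?PT W' \<and> W' \<noteq> {}"
    then obtain z w where "z \<in> W" "w \<in> W'"
      by blast
    obtain U where U: "\<forall>i\<in>?I. openin T (U i)" "z \<in> PiE ?I U" "PiE ?I U \<subseteq> W"
      using WW[unfolded openin_product_topology_alt] \<open>z \<in> W\<close> by blast
    obtain V where V: "\<forall>i\<in>?I. openin T (V i)" "w \<in> PiE ?I V" "PiE ?I V \<subseteq> W'"
      using WW[unfolded openin_product_topology_alt] \<open>w \<in> W'\<close> by blast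
    have "\<forall>i<length as. nonempty_open (U i) \<and> nonempty_open (V i)"
      using U V by (auto simp: PiE_iff)
    then obtain n where n: "1 \<le> n" "\<forall>i<length as. n * as ! i \<in> N (U i) (V i)"
      using simultaneous by blast
    then have "\<forall>i<length as. \<exists>x. x \<in> U i \<inter> topspace T \<and> (g ^^ (n * as ! i)) x \<in> V i"
      unfolding hit_times_iff by blast
    then obtain y where y: "\<forall>i<length as. y i \<in> U i \<inter> topspace T \<and> (g ^^ (n * as ! i)) (y i) \<in> V i"
      by metis
    define z' where "z' = restrict y ?I"
    have "z' \<in> PiE ?I U" "z' \<in> PiE ?I (\<lambda>i. topspace T)" "(?P ^^ n) z' \<in> PiE ?I V"
      using y by (simp_all add: z'_def funpow_power_prod_map)
    then have "z' \<in> W \<inter> (?P ^^ n) -` W' \<inter> topspace ?PT"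
      using U(3) V(3) by auto
    then have "n \<in> hit_times ?PT ?P W W'"
      using n(1) unfolding hit_times_def by blast
    then show "hit_times ?PT ?P W W' \<noteq> {}"
      by blast
  qed
qed

lemma multi_transitive_imp_F_transitive:
  assumes "multi_transitive T g"
  shows "F_transitive multiple_progression_sets T g"
  unfolding F_transitive_def multiple_progression_sets_def
proof (intro allI impI CollectI)
  fix U V m
  assume "openin T U \<and> U \<noteq> {} \<and> openin T V \<and> V \<noteq> {}"
  then have UV: "nonempty_open U" "nonempty_open V"
    by auto
  show "\<exists>k\<ge>1. \<forall>j\<in>{1..m}. k * j \<in> N U V"
  proof (cases "m = 0")
    case False
    have positive: "\<forall>a\<in>set [1..<m + 1]. 1 \<le> a"
      by (simp del: upt_Suc)
    have "vec_transitive [1..<m + 1] T g"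
      using assms False unfolding multi_transitive_def by simp
    then obtain k where "1 \<le> k" "\<forall>i<length [1..<m + 1]. k * [1..<m + 1] ! i \<in> N U V"
      using UV vec_transitive_iff[OF positive, THEN iffD1, rule_format, of "\<lambda>_. U" "\<lambda>_. V"]
      by blast
    moreover have "j - 1 < length [1..<m + 1]" "[1..<m + 1] ! (j - 1) = j" if "j \<in> {1..m}" for j
      using that by (auto simp del: upt_Suc)
    ultimately show ?thesis
      by metis
  qed auto
qed

lemma strongly_multi_transitive_imp_multi_transitive:
  "strongly_multi_transitive T g \<Longrightarrow> multi_transitive T g"
  unfolding strongly_multi_transitive_def multi_transitive_def by simp

lemma strongly_multi_transitive_imp_weakly_mixing:
  assumes "strongly_multi_transitive T g"
  shows "weakly_mixing T g"
  unfolding weakly_mixing_iff_Int_hit_times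
proof (intro allI impI)
  fix U1 V1 U2 V2
  assume "nonempty_open U1" "nonempty_open V1" "nonempty_open U2" "nonempty_open V2"
  moreover define U where "U i = (if i = 0 then U1 else U2)" for i :: nat
  moreover define V where "V i = (if i = 0 then V1 else V2)" for i :: nat
  ultimately have opens: "\<forall>i<length [1, 1::nat]. nonempty_open (U i) \<and> nonempty_open (V i)"
    by simp
  have positive: "\<forall>a\<in>set [1, 1::nat]. 1 \<le> a"
    by simp
  have "vec_transitive [1, 1] T g"
    using assms unfolding strongly_multi_transitive_def by simp
  then obtain n where "\<forall>i<length [1, 1::nat]. n * [1, 1] ! i \<in> N (U i) (V i)"
    using opens unfolding vec_transitive_iff[OF positive] by blast
  from this[rule_format, of 0] this[rule_format, of 1] have "n \<in> N U1 V1 \<inter> N U2 V2"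
    by (simp add: U_def V_def)
  then show "N U1 V1 \<inter> N U2 V2 \<noteq> {}"
    by blast
qed

lemma F_mixing_F_infty_iff:
  "F_mixing F_infty T g \<longleftrightarrow> (\<forall>U1 V1 U2 V2. nonempty_open U1 \<longrightarrow> nonempty_open V1 \<longrightarrow>
     nonempty_open U2 \<longrightarrow> nonempty_open V2 \<longrightarrow> N U1 V1 \<inter> N U2 V2 \<in> F_infty)"
  by (rule F_mixing_iff_Int_hit_times) (rule F_infty_superset)

lemma F_mixing_F_infty_imp_weakly_mixing:
  assumes "F_mixing F_infty T g"
  shows "weakly_mixing T g"
  unfolding weakly_mixing_iff_Int_hit_times
proof (intro allI impI)
  fix U1 V1 U2 V2
  assume "nonempty_open U1" "nonempty_open V1" "nonempty_open U2" "nonempty_open V2"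
  then have "N U1 V1 \<inter> N U2 V2 \<in> F_infty"
    by (rule assms[unfolded F_mixing_F_infty_iff, rule_format])
  then show "N U1 V1 \<inter> N U2 V2 \<noteq> {}"
    by (rule F_infty_nonempty)
qed

lemma F_mixing_F_infty_imp_F_transitive:
  assumes "F_mixing F_infty T g"
  shows "F_transitive F_infty T g"
  unfolding F_transitive_def
proof (intro allI impI)
  fix U V
  assume "openin T U \<and> U \<noteq> {} \<and> openin T V \<and> V \<noteq> {}"
  then have opens: "nonempty_open U" "nonempty_open V"
    by simp_all
  have "N U V \<inter> N U V \<in> F_infty"
    using opens opens by (rule assms[unfolded F_mixing_F_infty_iff, rule_format])
  then show "N U V \<in> F_infty"
    by simp
qed

end

section \<open>Dynamical systems on compact metric spaces\<close>

locale dynamical_system =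
  fixes X :: "'a::metric_space set" and f :: "'a \<Rightarrow> 'a"
  assumes compact: "compact X" and nonempty: "X \<noteq> {}"
    and continuous: "continuous_on X f" and invariant: "f ` X \<subseteq> X"
begin

sublocale self_map "top_of_set X" f .

lemma hit_times_subspace_iff: "n \<in> N U V \<longleftrightarrow> 1 \<le> n \<and> (\<exists>x\<in>U \<inter> X. (f ^^ n) x \<in> V)"
  by (simp add: hit_times_iff)

lemma funpow_in: "x \<in> X \<Longrightarrow> (f ^^ n) x \<in> X"
  by (induction n) (use invariant in auto)

lemma continuous_on_funpow: "continuous_on X (f ^^ n)"
proof (induction n)
  case (Suc n)
  have "continuous_on ((f ^^ n) ` X) f"
    using continuous by (rule continuous_on_subset) (auto intro: funpow_in)
  then show ?case
    using Suc.IH continuous_on_compose[of X "f ^^ n" f] by (simp add: o_def)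
qed (simp add: continuous_on_id)

lemma openin_preimage_funpow:
  "openin (top_of_set X) V \<Longrightarrow> openin (top_of_set X) (X \<inter> (f ^^ n) -` V)"
  by (rule continuous_openin_preimage[OF continuous_on_funpow]) (auto intro: funpow_in)

lemma hit_times_preimage: "n \<in> N U (X \<inter> (f ^^ c) -` V) \<Longrightarrow> n + c \<in> N U V"
  unfolding hit_times_subspace_iff by (auto simp: funpow_funpow_apply add.commute)

lemma image_eq_if_transitive:
  assumes transitive: "\<And>U V. nonempty_open U \<Longrightarrow> nonempty_open V \<Longrightarrow> N U V \<noteq> {}"
  shows "f ` X = X"
proof (rule ccontr)
  assume "f ` X \<noteq> X"
  then obtain y where y: "y \<in> X" "y \<notin> f ` X"
    using invariant by auto
  have "closed (f ` X)"
    using compact continuous by (simp add: compact_continuous_image compact_imp_closed)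
  then have "openin (top_of_set X) (X - f ` X)"
    by (simp add: Diff_eq openin_open_Int open_Compl)
  then have "nonempty_open (X - f ` X)"
    using y by blast
  moreover have "nonempty_open X"
    using nonempty by simp
  ultimately obtain n where "n \<in> N X (X - f ` X)"
    using transitive by blast
  then obtain x where "x \<in> X" "1 \<le> n" "(f ^^ n) x \<notin> f ` X"
    unfolding hit_times_subspace_iff by auto
  moreover obtain m where "n = Suc m"
    using \<open>1 \<le> n\<close> by (cases n) auto
  ultimately show False
    using funpow_in by auto
qed

lemma nonempty_open_preimage_funpow:
  assumes "f ` X = X" and "nonempty_open V"
  shows "nonempty_open (X \<inter> (f ^^ n) -` V)"
proof -
  have "(f ^^ n) ` X = X"
  proof (induction n)
    case (Suc n)
    have "(f ^^ Suc n) ` X = f ` ((f ^^ n) ` X)"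
      by (simp add: image_comp)
    then show ?case
      using Suc.IH assms(1) by simp
  qed simp
  moreover obtain v where "v \<in> V" "V \<subseteq> X"
    using assms(2) openin_imp_subset by blast
  ultimately obtain x where "x \<in> X" "(f ^^ n) x = v"
    by (metis imageE subsetD)
  then have "X \<inter> (f ^^ n) -` V \<noteq> {}"
    using \<open>v \<in> V\<close> by blast
  then show ?thesis
    using assms(2) openin_preimage_funpow by blast
qed

lemma weakly_mixing_imp_transitive:
  assumes "weakly_mixing (top_of_set X) f" and "nonempty_open U" and "nonempty_open V"
  shows "N U V \<noteq> {}"
  using assms(1)[unfolded weakly_mixing_iff_Int_hit_times, rule_format, OF assms(2,3,2,3)] by simp

lemma weakly_mixing_Int_hit_times:
  assumes wm: "weakly_mixing (top_of_set X) f"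
    and opens: "nonempty_open U1" "nonempty_open V1" "nonempty_open U2" "nonempty_open V2"
  obtains U V where "nonempty_open U" "nonempty_open V" "N U V \<subseteq> N U1 V1 \<inter> N U2 V2"
proof -
  obtain m where m: "m \<in> N U1 U2" "m \<in> N V1 V2"
    using wm[unfolded weakly_mixing_iff_Int_hit_times, rule_format, OF opens(1,3,2,4)] by blast
  define U where "U = U1 \<inter> (X \<inter> (f ^^ m) -` U2)"
  define V where "V = V1 \<inter> (X \<inter> (f ^^ m) -` V2)"
  have "openin (top_of_set X) U" "openin (top_of_set X) V"
    unfolding U_def V_def using opens by (simp_all add: openin_Int openin_preimage_funpow)
  moreover have "U \<noteq> {}" "V \<noteq> {}"
    using m unfolding U_def V_def hit_times_subspace_iff by auto
  moreover have "N U V \<subseteq> N U1 V1 \<inter> N U2 V2"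
  proof
    fix n assume "n \<in> N U V"
    then obtain x where x: "1 \<le> n" "x \<in> U" "(f ^^ n) x \<in> V"
      unfolding hit_times_subspace_iff by auto
    then have "x \<in> U1 \<inter> X" "(f ^^ n) x \<in> V1"
      unfolding U_def V_def by auto
    moreover have "(f ^^ m) x \<in> U2 \<inter> X" "(f ^^ n) ((f ^^ m) x) \<in> V2"
      using x funpow_in unfolding U_def V_def by (auto simp: funpow_funpow_apply add.commute)
    ultimately show "n \<in> N U1 V1 \<inter> N U2 V2"
      using x(1) unfolding Int_iff hit_times_subspace_iff by blast
  qed
  ultimately show ?thesis
    using that by blast
qed

lemma weakly_mixing_INT_hit_times:
  assumes wm: "weakly_mixing (top_of_set X) f" and "finite I"
    and opens: "\<And>i. i \<in> I \<Longrightarrow> nonempty_open (U i) \<and> nonempty_open (V i)"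
  obtains U' V' where "nonempty_open U'" "nonempty_open V'" "\<And>i. i \<in> I \<Longrightarrow> N U' V' \<subseteq> N (U i) (V i)"
proof -
  have "\<exists>U' V'. nonempty_open U' \<and> nonempty_open V' \<and> (\<forall>i\<in>I. N U' V' \<subseteq> N (U i) (V i))"
    using \<open>finite I\<close> opens
  proof (induction I rule: finite_induct)
    case empty
    show ?case
      using nonempty by (intro exI[of _ X]) simp
  next
    case (insert j I)
    then obtain U' V' where U'V': "nonempty_open U'" "nonempty_open V'"
      and sub: "\<forall>i\<in>I. N U' V' \<subseteq> N (U i) (V i)"
      by (metis insertCI)
    have "nonempty_open (U j)" "nonempty_open (V j)"
      using insert.prems by simp_all
    then obtain U'' V'' where "nonempty_open U''" "nonempty_open V''"
      "N U'' V'' \<subseteq> N (U j) (V j) \<inter> N U' V'"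
      using weakly_mixing_Int_hit_times[OF wm _ _ U'V'] by metis
    then show ?case
      using sub by blast
  qed
  then show ?thesis
    using that by blast
qed

lemma weakly_mixing_shifted_hit_times:
  assumes wm: "weakly_mixing (top_of_set X) f"
    and "nonempty_open U" and "nonempty_open V" and "finite C"
  obtains U' V' where "nonempty_open U'" "nonempty_open V'"
    "\<And>n c. n \<in> N U' V' \<Longrightarrow> c \<in> C \<Longrightarrow> n + c \<in> N U V"
proof -
  have "f ` X = X"
    using image_eq_if_transitive weakly_mixing_imp_transitive[OF wm] by blast
  then have "nonempty_open U \<and> nonempty_open (X \<inter> (f ^^ c) -` V)" for c
    using assms(2,3) nonempty_open_preimage_funpow by blast
  then obtain U' V' where "nonempty_open U'" "nonempty_open V'"
    and sub: "\<And>c. c \<in> C \<Longrightarrow> N U' V' \<subseteq> N U (X \<inter> (f ^^ c) -` V)"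
    using weakly_mixing_INT_hit_times[OF wm \<open>finite C\<close>, of "\<lambda>_. U" "\<lambda>c. X \<inter> (f ^^ c) -` V"]
    by metis
  moreover have "n + c \<in> N U V" if "n \<in> N U' V'" "c \<in> C" for n c
    using sub[OF that(2)] that(1) by (auto intro: hit_times_preimage)
  ultimately show ?thesis
    using that by blast
qed

lemma weakly_mixing_hit_times_thick:
  assumes wm: "weakly_mixing (top_of_set X) f" and "nonempty_open U" and "nonempty_open V"
  shows "N U V \<in> thick_sets"
  unfolding thick_sets_def
proof (intro CollectI conjI allI)
  show "N U V \<subseteq> {1..}"
    by (rule hit_times_positive)
  fix n :: nat
  obtain U' V' where U'V': "nonempty_open U'" "nonempty_open V'"
    and shift: "\<And>a c. a \<in> N U' V' \<Longrightarrow> c \<in> {..n} \<Longrightarrow> a + c \<in> N U V"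
    using weakly_mixing_shifted_hit_times[OF assms finite_atMost] by metis
  obtain a where a: "a \<in> N U' V'"
    using weakly_mixing_imp_transitive[OF wm U'V'] by blast
  have "t \<in> N U V" if "t \<in> {a..a + n}" for t
  proof -
    have "t - a \<in> {..n}" "a + (t - a) = t"
      using that by auto
    then show ?thesis
      using shift[OF a] by metis
  qed
  then show "\<exists>a. {a..a + n} \<subseteq> N U V"
    by blast
qed

lemma weakly_mixing_imp_strongly_multi_transitive:
  assumes wm: "weakly_mixing (top_of_set X) f"
    and progressions: "F_transitive multiple_progression_sets (top_of_set X) f"
  shows "strongly_multi_transitive (top_of_set X) f"
  unfolding strongly_multi_transitive_def
proof (intro allI impI)
  fix as :: "nat list"
  assume as: "as \<noteq> [] \<and> (\<forall>a\<in>set as. 1 \<le> a)"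
  show "vec_transitive as (top_of_set X) f"
    unfolding vec_transitive_iff[OF conjunct2[OF as]]
  proof (intro allI impI)
    fix U V :: "nat \<Rightarrow> 'a set"
    assume "\<forall>i<length as. nonempty_open (U i) \<and> nonempty_open (V i)"
    then obtain U' V' where U'V': "nonempty_open U'" "nonempty_open V'"
      and sub: "\<And>i. i \<in> {..<length as} \<Longrightarrow> N U' V' \<subseteq> N (U i) (V i)"
      using weakly_mixing_INT_hit_times[OF wm finite_lessThan, of "length as" U V] by auto
    have "N U' V' \<in> multiple_progression_sets"
      using progressions U'V' unfolding F_transitive_def by simp
    then obtain k where k: "1 \<le> k" "\<forall>j\<in>{1..Max (set as)}. k * j \<in> N U' V'"
      unfolding multiple_progression_sets_def by blast
    have "k * as ! i \<in> N (U i) (V i)" if "i < length as" for i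
    proof -
      have "as ! i \<in> set as"
        using that by simp
      then have "as ! i \<in> {1..Max (set as)}"
        using as by simp
      then have "k * as ! i \<in> N U' V'"
        using k(2) by blast
      then show ?thesis
        using sub[of i] that by blast
    qed
    then show "\<exists>n\<ge>1. \<forall>i<length as. n * as ! i \<in> N (U i) (V i)"
      using k(1) by blast
  qed
qed

lemma weakly_mixing_imp_F_transitive_F_infty:
  assumes wm: "weakly_mixing (top_of_set X) f"
    and progressions: "F_transitive multiple_progression_sets (top_of_set X) f"
  shows "F_transitive F_infty (top_of_set X) f"
  unfolding F_transitive_def
proof (intro allI impI)
  fix U V
  assume "openin (top_of_set X) U \<and> U \<noteq> {} \<and> openin (top_of_set X) V \<and> V \<noteq> {}"
  then have opens: "nonempty_open U" "nonempty_open V"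
    by simp_all
  show "N U V \<in> F_infty"
    unfolding F_infty_iff
  proof (intro conjI allI)
    show "N U V \<subseteq> {1..}"
      by (rule hit_times_positive)
    fix ns :: "nat list"
    obtain U' V' where U'V': "nonempty_open U'" "nonempty_open V'"
      and shift: "\<And>n c. n \<in> N U' V' \<Longrightarrow> c \<in> set ns \<Longrightarrow> n + c \<in> N U V"
      using weakly_mixing_shifted_hit_times[OF wm opens finite_set] by metis
    have "N U' V' \<in> multiple_progression_sets"
      using progressions U'V' unfolding F_transitive_def by simp
    then obtain k where k: "1 \<le> k" "\<forall>j\<in>{1..length ns}. k * j \<in> N U' V'"
      unfolding multiple_progression_sets_def by blast
    have "k * (j + 1) + ns ! j \<in> N U V" if "j < length ns" for j
    proof -
      have "j + 1 \<in> {1..length ns}"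
        using that by simp
      then have "k * (j + 1) \<in> N U' V'"
        using k(2) by blast
      then show ?thesis
        using shift that by simp
    qed
    then show "\<exists>k\<ge>1. \<forall>j<length ns. k * (j + 1) + ns ! j \<in> N U V"
      using k(1) by blast
  qed
qed

lemma weakly_mixing_imp_F_mixing_F_infty:
  assumes wm: "weakly_mixing (top_of_set X) f"
    and F: "F_transitive F_infty (top_of_set X) f"
  shows "F_mixing F_infty (top_of_set X) f"
  unfolding F_mixing_F_infty_iff
proof (intro allI impI)
  fix U1 V1 U2 V2
  assume "nonempty_open U1" "nonempty_open V1" "nonempty_open U2" "nonempty_open V2"
  then obtain U V where "nonempty_open U" "nonempty_open V" and sub: "N U V \<subseteq> N U1 V1 \<inter> N U2 V2"
    using weakly_mixing_Int_hit_times[OF wm] by metis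
  then have "N U V \<in> F_infty"
    using F unfolding F_transitive_def by simp
  moreover have "N U1 V1 \<inter> N U2 V2 \<subseteq> {1..}"
    using hit_times_positive by blast
  ultimately show "N U1 V1 \<inter> N U2 V2 \<in> F_infty"
    using F_infty_superset sub by blast
qed

lemma diff_set_visit_times_subset: "x \<in> X \<Longrightarrow> diff_set (visit_times f x W) \<subseteq> N W W"
proof
  fix d assume "x \<in> X" "d \<in> diff_set (visit_times f x W)"
  then obtain a b where ab: "d = a - b" "b < a" "(f ^^ a) x \<in> W" "(f ^^ b) x \<in> W" "1 \<le> b"
    unfolding diff_set_def visit_times_def by blast
  then have "(f ^^ d) ((f ^^ b) x) \<in> W"
    by (simp add: funpow_funpow_apply)
  then show "d \<in> N W W"
    using ab funpow_in[OF \<open>x \<in> X\<close>] unfolding hit_times_subspace_iff by auto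
qed

lemma hit_times_shift:
  assumes "W \<subseteq> X \<inter> (f ^^ a) -` U \<inter> (f ^^ b) -` V" and "a < b" and "n \<in> N W W"
  shows "n + (b - a) \<in> N U V"
proof -
  obtain y where y: "1 \<le> n" "y \<in> W" "(f ^^ n) y \<in> W"
    using assms(3) unfolding hit_times_subspace_iff by blast
  have "(f ^^ (n + (b - a))) ((f ^^ a) y) = (f ^^ b) ((f ^^ n) y)"
    using assms(2) by (simp add: funpow_funpow_apply add.commute)
  also have "\<dots> \<in> V"
    using assms(1) y(3) by blast
  finally have "(f ^^ (n + (b - a))) ((f ^^ a) y) \<in> V" .
  moreover have "(f ^^ a) y \<in> U \<inter> X"
    using assms(1) y(2) funpow_in by blast
  moreover have "1 \<le> n + (b - a)"
    using y(1) by simp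
  ultimately show ?thesis
    unfolding hit_times_subspace_iff by blast
qed

context
  fixes x
  assumes smt_point: "x \<in> X" "\<And>U. nonempty_open U \<Longrightarrow> visit_times f x U \<in> F_smt"
begin

lemma smt_point_diff_set: "nonempty_open U \<Longrightarrow> diff_set (visit_times f x U) \<in> F_infty \<inter> thick_sets"
  using smt_point(2) unfolding F_smt_def nabla_def by blast

lemma smt_point_visits_after:
  assumes "nonempty_open U"
  obtains p where "p \<in> visit_times f x U" "m < p"
proof -
  obtain a where "{a..a + m} \<subseteq> diff_set (visit_times f x U)"
    using smt_point_diff_set[OF assms] unfolding thick_sets_def by blast
  then have "a + m \<in> diff_set (visit_times f x U)"
    by auto
  then obtain p q where "a + m = p - q" "q < p" "p \<in> visit_times f x U" "q \<in> visit_times f x U"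
    unfolding diff_set_def by blast
  moreover have "1 \<le> q"
    using \<open>q \<in> visit_times f x U\<close> visit_times_positive by fastforce
  ultimately show ?thesis
    using that by simp
qed

lemma smt_point_neighbourhood:
  assumes "nonempty_open U" and "nonempty_open V"
  obtains a b W where "a < b" "nonempty_open W" "x \<in> W"
    "W \<subseteq> X \<inter> (f ^^ a) -` U \<inter> (f ^^ b) -` V"
proof -
  obtain a where a: "a \<in> visit_times f x U"
    using smt_point_visits_after[OF assms(1)] by blast
  obtain b where b: "b \<in> visit_times f x V" "a < b"
    using smt_point_visits_after[OF assms(2)] by blast
  define W where "W = (X \<inter> (f ^^ a) -` U) \<inter> (X \<inter> (f ^^ b) -` V)"
  have "openin (top_of_set X) W"
    unfolding W_def using assms by (simp add: openin_Int openin_preimage_funpow)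
  moreover have "x \<in> W"
    using a b smt_point(1) unfolding W_def visit_times_def by simp
  ultimately show ?thesis
    using that b(2) unfolding W_def by blast
qed

lemma smt_point_return_times:
  assumes "nonempty_open W" and "x \<in> W"
  shows "N W W \<in> F_infty \<inter> thick_sets"
proof -
  have "diff_set (visit_times f x W) \<subseteq> N W W"
    by (rule diff_set_visit_times_subset[OF smt_point(1)])
  then show ?thesis
    using smt_point_diff_set[OF assms(1)] F_infty_superset thick_sets_superset hit_times_positive
    by blast
qed

lemma smt_point_hit_times_F_infty:
  assumes "nonempty_open U" and "nonempty_open V"
  shows "N U V \<in> F_infty"
proof -
  obtain a b W where ab: "a < b" and W: "nonempty_open W" "x \<in> W"
    and sub: "W \<subseteq> X \<inter> (f ^^ a) -` U \<inter> (f ^^ b) -` V"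
    using smt_point_neighbourhood[OF assms] by blast
  have "(\<lambda>n. n + (b - a)) ` N W W \<in> F_infty"
    using smt_point_return_times[OF W] F_infty_shift by blast
  moreover have "(\<lambda>n. n + (b - a)) ` N W W \<subseteq> N U V"
    using hit_times_shift[OF sub ab] by blast
  ultimately show ?thesis
    using F_infty_superset hit_times_positive by blast
qed

lemma smt_point_weakly_mixing: "weakly_mixing (top_of_set X) f"
  unfolding weakly_mixing_iff_Int_hit_times
proof (intro allI impI)
  fix U1 V1 U2 V2
  assume "nonempty_open U1" "nonempty_open V1" "nonempty_open U2" "nonempty_open V2"
  then obtain a1 b1 W1 a2 b2 W2 where
    "a1 < b1" "nonempty_open W1" "x \<in> W1" and sub1: "W1 \<subseteq> X \<inter> (f ^^ a1) -` U1 \<inter> (f ^^ b1) -` V1" and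
    "a2 < b2" "nonempty_open W2" "x \<in> W2" and sub2: "W2 \<subseteq> X \<inter> (f ^^ a2) -` U2 \<inter> (f ^^ b2) -` V2"
    using smt_point_neighbourhood by metis
  define W where "W = W1 \<inter> W2"
  have "nonempty_open W" "x \<in> W"
    unfolding W_def using \<open>nonempty_open W1\<close> \<open>nonempty_open W2\<close> \<open>x \<in> W1\<close> \<open>x \<in> W2\<close>
    by (auto simp: openin_Int)
  then have "N W W \<in> thick_sets"
    using smt_point_return_times by blast
  then obtain c where c: "{c..c + ((b1 - a1) + (b2 - a2))} \<subseteq> N W W"
    unfolding thick_sets_def by blast
  text \<open>Both pairs are hit at time \<open>c + (b1 - a1) + (b2 - a2)\<close>: shift a return of \<open>W\<close>
    at time \<open>c + (b2 - a2)\<close> by \<open>b1 - a1\<close>, and one at time \<open>c + (b1 - a1)\<close> by \<open>b2 - a2\<close>.\<close>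
  have "c + (b2 - a2) \<in> N W W" "c + (b1 - a1) \<in> N W W"
    using subsetD[OF c] by simp_all
  moreover have "W \<subseteq> X \<inter> (f ^^ a1) -` U1 \<inter> (f ^^ b1) -` V1" "W \<subseteq> X \<inter> (f ^^ a2) -` U2 \<inter> (f ^^ b2) -` V2"
    unfolding W_def using sub1 sub2 by blast+
  ultimately have "c + (b2 - a2) + (b1 - a1) \<in> N U1 V1" "c + (b1 - a1) + (b2 - a2) \<in> N U2 V2"
    using hit_times_shift \<open>a1 < b1\<close> \<open>a2 < b2\<close> by blast+
  moreover have "c + (b2 - a2) + (b1 - a1) = c + (b1 - a1) + (b2 - a2)"
    by simp
  ultimately show "N U1 V1 \<inter> N U2 V2 \<noteq> {}"
    by (metis IntI empty_iff)
qed

end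

lemma F_point_transitive_imp_F_mixing:
  assumes "F_point_transitive F_smt (top_of_set X) f"
  shows "F_mixing F_infty (top_of_set X) f"
proof -
  obtain x where x: "x \<in> X" "\<And>U. nonempty_open U \<Longrightarrow> visit_times f x U \<in> F_smt"
    using assms unfolding F_point_transitive_def by auto
  have "F_transitive F_infty (top_of_set X) f"
    unfolding F_transitive_def using smt_point_hit_times_F_infty[OF x] by auto
  then show ?thesis
    using weakly_mixing_imp_F_mixing_F_infty smt_point_weakly_mixing[OF x] by blast
qed

subsection \<open>Baire category\<close>

definition return_points :: "'a set \<Rightarrow> nat \<Rightarrow> 'a set" where
  "return_points B c = {x \<in> X. c \<in> diff_set (visit_times f x B)}"

lemma openin_return_points:
  assumes "openin (top_of_set X) B"
  shows "openin (top_of_set X) (return_points B c)"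
  unfolding openin_subopen[of _ "return_points B c"]
proof
  fix y assume "y \<in> return_points B c"
  then obtain a b where ab: "y \<in> X" "c = a - b" "b < a" "1 \<le> b" "(f ^^ a) y \<in> B" "(f ^^ b) y \<in> B"
    unfolding return_points_def diff_set_def visit_times_def by blast
  define S where "S = (X \<inter> (f ^^ a) -` B) \<inter> (X \<inter> (f ^^ b) -` B)"
  have "openin (top_of_set X) S"
    unfolding S_def using assms by (simp add: openin_Int openin_preimage_funpow)
  moreover have "y \<in> S"
    using ab unfolding S_def by simp
  moreover have "S \<subseteq> return_points B c"
  proof
    fix z assume "z \<in> S"
    then have "z \<in> X" "a \<in> visit_times f z B" "b \<in> visit_times f z B"
      using ab unfolding S_def visit_times_def by auto
    then show "z \<in> return_points B c"
      using ab unfolding return_points_def diff_set_def by blast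
  qed
  ultimately show "\<exists>S. openin (top_of_set X) S \<and> y \<in> S \<and> S \<subseteq> return_points B c"
    by blast
qed

lemma return_points_dense:
  assumes wm: "weakly_mixing (top_of_set X) f"
    and B: "openin (top_of_set X) B" and c: "c \<in> N B B" and Q: "nonempty_open Q"
  shows "return_points B c \<inter> Q \<noteq> {}"
proof -
  have "nonempty_open (B \<inter> (X \<inter> (f ^^ c) -` B))"
    using B c unfolding hit_times_subspace_iff by (auto simp: openin_Int openin_preimage_funpow)
  then obtain b where "b \<in> N Q (B \<inter> (X \<inter> (f ^^ c) -` B))"
    using weakly_mixing_imp_transitive[OF wm Q] by blast
  then obtain y where y: "1 \<le> b" "y \<in> Q" "y \<in> X" "(f ^^ b) y \<in> B" "(f ^^ (c + b)) y \<in> B"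
    unfolding hit_times_subspace_iff by (auto simp: funpow_funpow_apply)
  moreover have "1 \<le> c"
    using c hit_times_positive by fastforce
  ultimately have "c \<in> diff_set (visit_times f y B)"
    unfolding diff_set_def visit_times_def by (intro CollectI exI[of _ "c + b"] exI[of _ b]) auto
  then show ?thesis
    using y unfolding return_points_def by blast
qed

lemma F_mixing_imp_F_point_transitive:
  assumes mixing: "F_mixing F_infty (top_of_set X) f"
  shows "F_point_transitive F_smt (top_of_set X) f"
proof -
  have wm: "weakly_mixing (top_of_set X) f"
    using mixing by (rule F_mixing_F_infty_imp_weakly_mixing)
  have F: "F_transitive F_infty (top_of_set X) f"
    using mixing by (rule F_mixing_F_infty_imp_F_transitive)
  obtain \<B> where \<B>: "countable \<B>" "\<forall>B\<in>\<B>. openin (top_of_set X) B"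
    "\<forall>U y. openin (top_of_set X) U \<and> y \<in> U \<longrightarrow> (\<exists>B\<in>\<B>. y \<in> B \<and> B \<subseteq> U)"
    using compact_imp_second_countable[OF compact] unfolding second_countable_def by blast
  define \<G> where "\<G> = (\<lambda>(B, c). return_points B c) ` (SIGMA B:\<B>. N B B)"
  have "countable \<G>"
    unfolding \<G>_def using \<B>(1) by simp
  moreover have "openin (top_of_set X) G \<and> (top_of_set X) closure_of G = X" if "G \<in> \<G>" for G
  proof -
    from \<open>G \<in> \<G>\<close> obtain B c
      where G: "G = return_points B c" and B: "openin (top_of_set X) B" and c: "c \<in> N B B"
      using \<B>(2) unfolding \<G>_def by auto
    have "(top_of_set X) closure_of G = topspace (top_of_set X)"
      unfolding dense_intersects_open G using return_points_dense[OF wm B c] by blast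
    then show ?thesis
      using openin_return_points[OF B] G by simp
  qed
  ultimately obtain x where x: "x \<in> X" "\<And>G. G \<in> \<G> \<Longrightarrow> x \<in> G"
    using compact_Baire[OF compact nonempty] by metis
  have "visit_times f x U \<in> F_smt" if U: "nonempty_open U" for U
  proof -
    obtain y where "y \<in> U"
      using U by blast
    then obtain B where B: "B \<in> \<B>" "y \<in> B" "B \<subseteq> U"
      using \<B>(3) U by blast
    then have "nonempty_open B"
      using \<B>(2) by blast
    have "N B B \<subseteq> diff_set (visit_times f x B)"
    proof
      fix c assume "c \<in> N B B"
      then have "return_points B c \<in> \<G>"
        unfolding \<G>_def using B(1) by (intro image_eqI[of _ _ "(B, c)"]) auto
      then show "c \<in> diff_set (visit_times f x B)"
        using x(2) unfolding return_points_def by blast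
    qed
    also have "\<dots> \<subseteq> diff_set (visit_times f x U)"
      using B(3) by (intro diff_set_mono visit_times_mono)
    finally have sub: "N B B \<subseteq> diff_set (visit_times f x U)" .
    have "N B B \<in> F_infty"
      using F \<open>nonempty_open B\<close> unfolding F_transitive_def by simp
    then have "diff_set (visit_times f x U) \<in> F_infty"
      using sub diff_set_positive by (rule F_infty_superset)
    moreover have "N B B \<in> thick_sets"
      using weakly_mixing_hit_times_thick[OF wm \<open>nonempty_open B\<close> \<open>nonempty_open B\<close>] .
    then have "diff_set (visit_times f x U) \<in> thick_sets"
      using sub diff_set_positive by (rule thick_sets_superset)
    ultimately show ?thesis
      using visit_times_positive[of f x U] unfolding F_smt_def nabla_def by simp
  qed
  then show ?thesis
    unfolding F_point_transitive_def using x(1) by auto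
qed

end

theorem theorem4p10:
  fixes X :: "'a :: metric_space set" and f :: "'a \<Rightarrow> 'a"
  assumes "compact X" and "X \<noteq> {}" and "continuous_on X f" and "f ` X \<subseteq> X"
  shows "(strongly_multi_transitive (top_of_set X) f
            \<longleftrightarrow> weakly_mixing (top_of_set X) f \<and> multi_transitive (top_of_set X) f)
       \<and> (weakly_mixing (top_of_set X) f \<and> multi_transitive (top_of_set X) f
            \<longleftrightarrow> F_mixing F_infty (top_of_set X) f)
       \<and> (F_mixing F_infty (top_of_set X) f
            \<longleftrightarrow> F_point_transitive F_smt (top_of_set X) f)"
proof -
  interpret dynamical_system X f
    using assms by unfold_locales
  have F_mixing_imp_progressions:
    "F_mixing F_infty (top_of_set X) f \<Longrightarrow> F_transitive multiple_progression_sets (top_of_set X) f"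
    using F_mixing_F_infty_imp_F_transitive F_transitive_mono F_infty_subset_multiple_progression_sets
    by blast
  have "strongly_multi_transitive (top_of_set X) f
      \<longleftrightarrow> weakly_mixing (top_of_set X) f \<and> multi_transitive (top_of_set X) f"
    using strongly_multi_transitive_imp_weakly_mixing strongly_multi_transitive_imp_multi_transitive
      weakly_mixing_imp_strongly_multi_transitive multi_transitive_imp_F_transitive
    by blast
  moreover have "weakly_mixing (top_of_set X) f \<and> multi_transitive (top_of_set X) f
      \<longleftrightarrow> F_mixing F_infty (top_of_set X) f"
    using weakly_mixing_imp_F_mixing_F_infty weakly_mixing_imp_F_transitive_F_infty
      multi_transitive_imp_F_transitive F_mixing_F_infty_imp_weakly_mixing F_mixing_imp_progressions
      weakly_mixing_imp_strongly_multi_transitive strongly_multi_transitive_imp_multi_transitive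
    by blast
  moreover have "F_mixing F_infty (top_of_set X) f \<longleftrightarrow> F_point_transitive F_smt (top_of_set X) f"
    using F_mixing_imp_F_point_transitive F_point_transitive_imp_F_mixing by blast
  ultimately show ?thesis
    by blast
qed

end
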